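(* In System $\mathsf{F_{<:}^{K\top}}$, for every term-in-context $\Theta\vdash t$ and type $\Theta\vdash T$: $\Theta\vdash t:T$ if and only if there is a type $S$ with $\Theta\vdash_M t:S$ and $\Theta\vdash S<:T$.
   Context: System $\mathsf{F_{<:}^{K\top}}$: raw types $T ::= \top \mid X \mid T\to T \mid \forall^{\mathsf K}(X<:T).T \mid \forall^\top(X<:T).T$, up to $\alpha$-conversion. Contexts $\Theta$: finite sequences of $X<:T$ or $x:T$ with distinct variables, each type well-formed over the preceding part. Subtyping $\Theta\vdash S<:T$: (Var) $\Theta,X<:T,\Theta'\vdash X<:T$; (Top) $T<:\top$; (Refl); (Trans); ($\to$) from $S'<:S$, $T<:T'$ infer $S\to T<:S'\to T'$; ($\forall$-Fun) from $\Theta,X<:S\vdash T<:T'$ infer $\Theta\vdash\forall^{\mathsf K}(X<:S).T<:\forall^{\mathsf K}(X<:S).T'$; ($\forall$-Loc) from $\Theta\vdash T_0<:S_0$, $\Theta,X<:S_0\vdash S_1<:T_1$ infer $\Theta\vdash\forall^{\mathsf K}(X<:S_0).S_1<:\forall^\top(X<:T_0).T_1$; ($\forall$-Top) from $\Theta\vdash T_0<:S_0$, $\Theta,X<:\top\vdash S_1<:T_1$ infer $\Theta\vdash\forall^\top(X<:S_0).S_1<:\forall^\top(X<:T_0).T_1$. Raw terms $t ::= \mathsf{top}\mid x\mid\lambda(x:T).t\mid\Lambda(X<:T).t\mid t\,t\mid t\{T\}$. Typing $\Theta\vdash t:T$: $\Theta\vdash\mathsf{top}:\top$; $\Theta,x:T,\Theta'\vdash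 x:T$; (sub) from $t:T$, $T<:T'$ infer $t:T'$; from $\Theta,x:S\vdash t:T$ infer $\Theta\vdash\lambda(x:S).t:S\to T$; from $t:S\to T$, $s:S$ infer $t\,s:T$; from $\Theta,X<:S\vdash t:T$ infer $\Theta\vdash\Lambda(X<:S).t:\forall^{\mathsf K}(X<:S).T$; from $\Theta\vdash t:\forall^\top(X<:S).T$ and $\Theta\vdash S'<:S$ infer $\Theta\vdash t\{S'\}:T[S'/X]$. $\Theta^*(T)=\Theta^*(S)$ if $T\equiv X$ and $X<:S$ occurs in $\Theta$; $\Theta^*(T)=T$ otherwise. Minimal typing $\Theta\vdash_M t:T$: $\Theta,x:T,\Theta'\vdash_M x:T$; $\Theta\vdash_M\mathsf{top}:\top$; from $\Theta,x:S\vdash_M t:T$ infer $\Theta\vdash_M\lambda(x:S).t:S\to T$; from $\Theta\vdash_M r:R$, $\Theta\vdash_M s:S$, $\Theta\vdash S<:S'$ with $\Theta^*(R)=S'\to T$ infer $\Theta\vdash_M r\,s:T$; from $\Theta,X<:S\vdash_M t:T$ infer $\Theta\vdash_M\Lambda(X<:S).t:\forall^{\mathsf K}(X<:S).T$; from $\Theta\vdash_M r:R$ and $\Theta\vdash S<:S'$ with $\Theta^*(R)=\forall^{\mathsf K}(X<:S').T$ or $\Theta^*(R)=\forall^\top(X<:S').T$ infer $\Theta\vdash_M r\{S\}:T[S/X]$. *)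

theory Defs
  imports Main
begin

text \<open>Types and terms are
represented with de Bruijn indices (this realises "up to alpha-conversion").
Type variables and term variables live in separate index spaces: TVar i refers
to the i-th type-variable binding of the context counted from the most recent
one, Var j to the j-th term-variable binding.  Contexts are lists whose head is
the most recently added binding.\<close>

datatype ty =
    Top
  | TVar nat
  | Arr ty ty
  | AllK ty ty   \<comment> \<open>AllK S T: kernel quantifier, binder X<:S, body T (X is index 0)\<close>
  | AllT ty ty

datatype trm =
    TopTm
  | Var nat
  | Abs ty trm
  | TAbs ty trm
  | App trm trm
  | TApp trm ty

datatype bind = TB ty | VB ty

type_synonym ctx = "bind list"

fun liftT :: "nat \<Rightarrow> nat \<Rightarrow> ty \<Rightarrow> ty" where
  "liftT n k Top = Top"
| "liftT n k (TVar i) = (if i < k then TVar i else TVar (i + n))"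
| "liftT n k (Arr S T) = Arr (liftT n k S) (liftT n k T)"
| "liftT n k (AllK S T) = AllK (liftT n k S) (liftT n (Suc k) T)"
| "liftT n k (AllT S T) = AllT (liftT n k S) (liftT n (Suc k) T)"

text \<open>substT T k U: substitute U for type variable k in T (and lower the indices above k).
  T[S/X] for the body T of a binder X is substT T 0 S.\<close>
fun substT :: "ty \<Rightarrow> nat \<Rightarrow> ty \<Rightarrow> ty" where
  "substT Top k U = Top"
| "substT (TVar i) k U =
     (if i < k then TVar i else if i = k then liftT k 0 U else TVar (i - 1))"
| "substT (Arr S T) k U = Arr (substT S k U) (substT T k U)"
| "substT (AllK S T) k U = AllK (substT S k U) (substT T (Suc k) U)"
| "substT (AllT S T) k U = AllT (substT S k U) (substT T (Suc k) U)"

fun ntv :: "ctx \<Rightarrow> nat" where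
  "ntv [] = 0"
| "ntv (TB S # \<Gamma>) = Suc (ntv \<Gamma>)"
| "ntv (VB T # \<Gamma>) = ntv \<Gamma>"

text \<open>bound of type variable i, expressed in the whole context\<close>
fun tvbound :: "ctx \<Rightarrow> nat \<Rightarrow> ty option" where
  "tvbound [] i = None"
| "tvbound (TB S # \<Gamma>) 0 = Some (liftT 1 0 S)"
| "tvbound (TB S # \<Gamma>) (Suc i) = map_option (liftT 1 0) (tvbound \<Gamma> i)"
| "tvbound (VB T # \<Gamma>) i = tvbound \<Gamma> i"

text \<open>type of term variable j, expressed in the whole context\<close>
fun vlookup :: "ctx \<Rightarrow> nat \<Rightarrow> ty option" where
  "vlookup [] j = None"
| "vlookup (VB T # \<Gamma>) 0 = Some T"
| "vlookup (VB T # \<Gamma>) (Suc j) = vlookup \<Gamma> j"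
| "vlookup (TB S # \<Gamma>) j = map_option (liftT 1 0) (vlookup \<Gamma> j)"

fun wfT :: "nat \<Rightarrow> ty \<Rightarrow> bool" where
  "wfT n Top = True"
| "wfT n (TVar i) = (i < n)"
| "wfT n (Arr S T) = (wfT n S \<and> wfT n T)"
| "wfT n (AllK S T) = (wfT n S \<and> wfT (Suc n) T)"
| "wfT n (AllT S T) = (wfT n S \<and> wfT (Suc n) T)"

fun wf_ctx :: "ctx \<Rightarrow> bool" where
  "wf_ctx [] = True"
| "wf_ctx (TB S # \<Gamma>) = (wf_ctx \<Gamma> \<and> wfT (ntv \<Gamma>) S)"
| "wf_ctx (VB T # \<Gamma>) = (wf_ctx \<Gamma> \<and> wfT (ntv \<Gamma>) T)"

fun wf_tm :: "ctx \<Rightarrow> trm \<Rightarrow> bool" where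
  "wf_tm \<Gamma> TopTm = True"
| "wf_tm \<Gamma> (Var j) = (vlookup \<Gamma> j \<noteq> None)"
| "wf_tm \<Gamma> (Abs T t) = (wfT (ntv \<Gamma>) T \<and> wf_tm (VB T # \<Gamma>) t)"
| "wf_tm \<Gamma> (TAbs T t) = (wfT (ntv \<Gamma>) T \<and> wf_tm (TB T # \<Gamma>) t)"
| "wf_tm \<Gamma> (App t s) = (wf_tm \<Gamma> t \<and> wf_tm \<Gamma> s)"
| "wf_tm \<Gamma> (TApp t T) = (wf_tm \<Gamma> t \<and> wfT (ntv \<Gamma>) T)"

fun promote :: "ctx \<Rightarrow> ty \<Rightarrow> ty" where
  "promote [] T = T"
| "promote (VB U # \<Gamma>) T = promote \<Gamma> T"
| "promote (TB S # \<Gamma>) (TVar 0) = liftT 1 0 (promote \<Gamma> S)"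
| "promote (TB S # \<Gamma>) (TVar (Suc i)) = liftT 1 0 (promote \<Gamma> (TVar i))"
| "promote (TB S # \<Gamma>) Top = Top"
| "promote (TB S # \<Gamma>) (Arr A B) = Arr A B"
| "promote (TB S # \<Gamma>) (AllK A B) = AllK A B"
| "promote (TB S # \<Gamma>) (AllT A B) = AllT A B"

inductive sub :: "ctx \<Rightarrow> ty \<Rightarrow> ty \<Rightarrow> bool" where
  SVar: "tvbound \<Gamma> i = Some T \<Longrightarrow> sub \<Gamma> (TVar i) T"
| STop: "sub \<Gamma> T Top"
| SRefl: "sub \<Gamma> T T"
| STrans: "sub \<Gamma> S U \<Longrightarrow> sub \<Gamma> U T \<Longrightarrow> sub \<Gamma> S T"
| SArr: "sub \<Gamma> S' S \<Longrightarrow> sub \<Gamma> T T' \<Longrightarrow> sub \<Gamma> (Arr S T) (Arr S' T')"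
| SAllFun: "sub (TB S # \<Gamma>) T T' \<Longrightarrow> sub \<Gamma> (AllK S T) (AllK S T')"
| SAllLoc: "sub \<Gamma> T0 S0 \<Longrightarrow> sub (TB S0 # \<Gamma>) S1 T1 \<Longrightarrow> sub \<Gamma> (AllK S0 S1) (AllT T0 T1)"
| SAllTop: "sub \<Gamma> T0 S0 \<Longrightarrow> sub (TB Top # \<Gamma>) S1 T1 \<Longrightarrow> sub \<Gamma> (AllT S0 S1) (AllT T0 T1)"

inductive typing :: "ctx \<Rightarrow> trm \<Rightarrow> ty \<Rightarrow> bool" where
  TyTop: "typing \<Gamma> TopTm Top"
| TyVar: "vlookup \<Gamma> j = Some T \<Longrightarrow> typing \<Gamma> (Var j) T"
| TySub: "typing \<Gamma> t T \<Longrightarrow> sub \<Gamma> T T' \<Longrightarrow> typing \<Gamma> t T'"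
| TyAbs: "typing (VB S # \<Gamma>) t T \<Longrightarrow> typing \<Gamma> (Abs S t) (Arr S T)"
| TyApp: "typing \<Gamma> t (Arr S T) \<Longrightarrow> typing \<Gamma> s S \<Longrightarrow> typing \<Gamma> (App t s) T"
| TyTAbs: "typing (TB S # \<Gamma>) t T \<Longrightarrow> typing \<Gamma> (TAbs S t) (AllK S T)"
| TyTApp: "typing \<Gamma> t (AllT S T) \<Longrightarrow> sub \<Gamma> S' S \<Longrightarrow> typing \<Gamma> (TApp t S') (substT T 0 S')"

inductive mtyp :: "ctx \<Rightarrow> trm \<Rightarrow> ty \<Rightarrow> bool" where
  MVar: "vlookup \<Gamma> j = Some T \<Longrightarrow> mtyp \<Gamma> (Var j) T"
| MTop: "mtyp \<Gamma> TopTm Top"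
| MAbs: "mtyp (VB S # \<Gamma>) t T \<Longrightarrow> mtyp \<Gamma> (Abs S t) (Arr S T)"
| MApp: "mtyp \<Gamma> r R \<Longrightarrow> mtyp \<Gamma> s S \<Longrightarrow> sub \<Gamma> S S' \<Longrightarrow> promote \<Gamma> R = Arr S' T
         \<Longrightarrow> mtyp \<Gamma> (App r s) T"
| MTAbs: "mtyp (TB S # \<Gamma>) t T \<Longrightarrow> mtyp \<Gamma> (TAbs S t) (AllK S T)"
| MTApp: "mtyp \<Gamma> r R \<Longrightarrow> sub \<Gamma> S S'
          \<Longrightarrow> (promote \<Gamma> R = AllK S' T \<or> promote \<Gamma> R = AllT S' T)
          \<Longrightarrow> mtyp \<Gamma> (TApp r S) (substT T 0 S)"

end

theory Submission
  imports Defs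
begin

text \<open>Minimal typing only inserts subsumption where an eliminator needs it: at an
application the function type is promoted along the bounds of its type variables,
which is an instance of subtyping. This gives soundness. For completeness, every
typing derivation is replayed by minimal typing up to a subtype, the key point being
that subtyping can be inverted through promotion: if \<open>\<Gamma> \<turnstile> A <: B\<close> and \<open>\<Gamma>\<^sup>*(B)\<close> is an
arrow or a quantifier, then \<open>\<Gamma>\<^sup>*(A)\<close> has a matching shape with componentwise subtyping.
Since transitivity is a rule, this is proved by induction on subtyping derivations.
The kernel/top interplay in the transitivity case is settled by narrowing a \<open>Top\<close>
bound, and type application is handled by the substitution lemma for subtyping.\<close>

lemma liftT_0 [simp]: "liftT 0 k T = T"
  by (induct T arbitrary: k) auto

lemma substT_liftT [simp]: "substT (liftT (Suc 0) k T) k U = T"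
  by (induct T arbitrary: k) auto

lemma liftT_liftT_commute:
  "j \<le> k \<Longrightarrow> liftT 1 j (liftT 1 k S) = liftT 1 (Suc k) (liftT 1 j S)"
  by (induct S arbitrary: j k) auto

lemma liftT_liftT_merge: "i \<le> j \<Longrightarrow> j \<le> i + m \<Longrightarrow> liftT n j (liftT m i U) = liftT (n + m) i U"
  by (induct U arbitrary: i j) auto

lemma substT_liftT_commute:
  "j \<le> k \<Longrightarrow> substT (liftT 1 j S) (Suc k) U = liftT 1 j (substT S k U)"
  by (induct S arbitrary: j k) (auto simp: liftT_liftT_merge)

text \<open>Subtyping only consults the bounds of type variables, so all relations between
contexts below are phrased through \<^const>\<open>tvbound\<close>.\<close>

definition tvar_inserted :: "nat \<Rightarrow> ctx \<Rightarrow> ctx \<Rightarrow> bool" where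
  "tvar_inserted k \<Gamma> \<Gamma>' \<longleftrightarrow>
     (\<forall>i T. tvbound \<Gamma> i = Some T \<longrightarrow> tvbound \<Gamma>' (if i < k then i else Suc i) = Some (liftT 1 k T))"

lemma tvar_inserted_Cons:
  assumes "tvar_inserted k \<Gamma> \<Gamma>'"
  shows "tvar_inserted (Suc k) (TB S # \<Gamma>) (TB (liftT 1 k S) # \<Gamma>')"
  unfolding tvar_inserted_def
proof (intro allI impI)
  fix i X
  assume bound: "tvbound (TB S # \<Gamma>) i = Some X"
  show "tvbound (TB (liftT 1 k S) # \<Gamma>') (if i < Suc k then i else Suc i) = Some (liftT 1 (Suc k) X)"
  proof (cases i)
    case 0
    then show ?thesis using bound liftT_liftT_commute[of 0 k S] by simp
  next
    case (Suc j)
    then obtain Y where Y: "tvbound \<Gamma> j = Some Y" "X = liftT 1 0 Y" using bound by auto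
    then have "tvbound \<Gamma>' (if j < k then j else Suc j) = Some (liftT 1 k Y)"
      using assms unfolding tvar_inserted_def by blast
    moreover have "(if i < Suc k then i else Suc i) = Suc (if j < k then j else Suc j)"
      using Suc by simp
    ultimately show ?thesis using Y(2) liftT_liftT_commute[of 0 k Y] by simp
  qed
qed

lemma sub_liftT: "sub \<Gamma> A B \<Longrightarrow> tvar_inserted k \<Gamma> \<Gamma>' \<Longrightarrow> sub \<Gamma>' (liftT 1 k A) (liftT 1 k B)"
proof (induction arbitrary: \<Gamma>' k rule: sub.induct)
  case (SVar \<Gamma> i T)
  have "liftT 1 k (TVar i) = TVar (if i < k then i else Suc i)" by simp
  then show ?case using SVar unfolding tvar_inserted_def by (metis sub.SVar)
next
  case (STrans \<Gamma> S U T)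
  then show ?case by (blast intro: sub.STrans)
next
  case (SAllFun S \<Gamma> T T')
  then show ?case using tvar_inserted_Cons by (simp add: sub.SAllFun)
next
  case (SAllLoc \<Gamma> T0 S0 S1 T1)
  then show ?case using tvar_inserted_Cons by (simp add: sub.SAllLoc)
next
  case (SAllTop \<Gamma> T0 S0 S1 T1)
  then show ?case using tvar_inserted_Cons[of k \<Gamma> \<Gamma>' Top] by (simp add: sub.SAllTop)
qed (auto intro: sub.intros)

lemma sub_weaken_TB: "sub \<Gamma> A B \<Longrightarrow> sub (TB S # \<Gamma>) (liftT 1 0 A) (liftT 1 0 B)"
  by (erule sub_liftT) (simp add: tvar_inserted_def)

definition ctx_narrows :: "ctx \<Rightarrow> ctx \<Rightarrow> bool" where
  "ctx_narrows \<Gamma>' \<Gamma> \<longleftrightarrow> (\<forall>i T. tvbound \<Gamma> i = Some T \<longrightarrow> sub \<Gamma>' (TVar i) T)"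

lemma ctx_narrows_Cons:
  assumes "ctx_narrows \<Gamma>' \<Gamma>"
  shows "ctx_narrows (TB S # \<Gamma>') (TB S # \<Gamma>)"
  unfolding ctx_narrows_def
proof (intro allI impI)
  fix i X
  assume bound: "tvbound (TB S # \<Gamma>) i = Some X"
  show "sub (TB S # \<Gamma>') (TVar i) X"
  proof (cases i)
    case 0
    then show ?thesis using bound by (auto intro: sub.SVar)
  next
    case (Suc j)
    then obtain Y where Y: "tvbound \<Gamma> j = Some Y" "X = liftT 1 0 Y" using bound by auto
    then have "sub \<Gamma>' (TVar j) Y" using assms unfolding ctx_narrows_def by blast
    then show ?thesis using Suc Y(2) sub_weaken_TB by fastforce
  qed
qed

lemma sub_narrow: "sub \<Gamma> A B \<Longrightarrow> ctx_narrows \<Gamma>' \<Gamma> \<Longrightarrow> sub \<Gamma>' A B"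
proof (induction arbitrary: \<Gamma>' rule: sub.induct)
  case (SVar \<Gamma> i T)
  then show ?case unfolding ctx_narrows_def by blast
qed (auto intro: sub.intros ctx_narrows_Cons)

lemma sub_add_VB: "sub \<Gamma> A B \<Longrightarrow> sub (VB U # \<Gamma>) A B"
  by (erule sub_narrow) (simp add: ctx_narrows_def sub.SVar)

lemma sub_drop_VB: "sub (VB U # \<Gamma>) A B \<Longrightarrow> sub \<Gamma> A B"
  by (erule sub_narrow) (simp add: ctx_narrows_def sub.SVar)

lemma sub_narrow_Top: "sub (TB Top # \<Gamma>) A B \<Longrightarrow> sub (TB V # \<Gamma>) A B"
proof (erule sub_narrow, unfold ctx_narrows_def, intro allI impI)
  fix i X
  assume "tvbound (TB Top # \<Gamma>) i = Some X"
  then show "sub (TB V # \<Gamma>) (TVar i) X" by (cases i) (auto intro: sub.intros)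
qed

text \<open>At \<open>i = k\<close> the condition says that \<open>U\<close> satisfies the bound of \<open>k\<close>; elsewhere it
transports the bounds of the renumbered variables.\<close>

definition subst_ctx :: "nat \<Rightarrow> ty \<Rightarrow> ctx \<Rightarrow> ctx \<Rightarrow> bool" where
  "subst_ctx k U \<Gamma> \<Gamma>' \<longleftrightarrow>
     (\<forall>i T. tvbound \<Gamma> i = Some T \<longrightarrow> sub \<Gamma>' (substT (TVar i) k U) (substT T k U))"

lemma subst_ctx_Cons:
  assumes "subst_ctx k U \<Gamma> \<Gamma>'"
  shows "subst_ctx (Suc k) U (TB S # \<Gamma>) (TB (substT S k U) # \<Gamma>')"
  unfolding subst_ctx_def
proof (intro allI impI)
  fix i X
  assume bound: "tvbound (TB S # \<Gamma>) i = Some X"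
  show "sub (TB (substT S k U) # \<Gamma>') (substT (TVar i) (Suc k) U) (substT X (Suc k) U)"
  proof (cases i)
    case 0
    then show ?thesis using bound substT_liftT_commute[of 0 k S U] by (auto intro: sub.SVar)
  next
    case (Suc j)
    then obtain Y where Y: "tvbound \<Gamma> j = Some Y" "X = liftT 1 0 Y" using bound by auto
    then have "sub \<Gamma>' (substT (TVar j) k U) (substT Y k U)"
      using assms unfolding subst_ctx_def by blast
    then have "sub (TB (substT S k U) # \<Gamma>')
                 (liftT 1 0 (substT (TVar j) k U)) (liftT 1 0 (substT Y k U))"
      by (rule sub_weaken_TB)
    then show ?thesis
      using Suc Y(2) substT_liftT_commute[of 0 k "TVar j" U] substT_liftT_commute[of 0 k Y U]
      by simp
  qed
qed

lemma sub_substT: "sub \<Gamma> A B \<Longrightarrow> subst_ctx k U \<Gamma> \<Gamma>' \<Longrightarrow> sub \<Gamma>' (substT A k U) (substT B k U)"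
proof (induction arbitrary: \<Gamma>' k rule: sub.induct)
  case (SVar \<Gamma> i T)
  then show ?case unfolding subst_ctx_def by blast
next
  case (STrans \<Gamma> S U' T)
  then show ?case by (blast intro: sub.STrans)
next
  case (SAllFun S \<Gamma> T T')
  then show ?case using subst_ctx_Cons by (simp add: sub.SAllFun)
next
  case (SAllLoc \<Gamma> T0 S0 S1 T1)
  then show ?case using subst_ctx_Cons by (simp add: sub.SAllLoc)
next
  case (SAllTop \<Gamma> T0 S0 S1 T1)
  then show ?case using subst_ctx_Cons[of k U \<Gamma> \<Gamma>' Top] by (simp add: sub.SAllTop)
qed (auto intro: sub.intros)

lemma sub_substT0:
  assumes "sub (TB V # \<Gamma>) A B" and "sub \<Gamma> S V"
  shows "sub \<Gamma> (substT A 0 S) (substT B 0 S)"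
proof -
  have "subst_ctx 0 S (TB V # \<Gamma>) \<Gamma>"
    unfolding subst_ctx_def
  proof (intro allI impI)
    fix i X
    assume "tvbound (TB V # \<Gamma>) i = Some X"
    then show "sub \<Gamma> (substT (TVar i) 0 S) (substT X 0 S)"
      using assms(2) by (cases i) (auto intro: sub.SVar)
  qed
  with assms(1) show ?thesis by (rule sub_substT)
qed

lemma promote_non_TVar [simp]: "\<forall>i. T \<noteq> TVar i \<Longrightarrow> promote \<Gamma> T = T"
proof (induct \<Gamma>)
  case (Cons b \<Gamma>)
  then show ?case by (cases b; cases T) auto
qed simp

lemma promote_liftT: "promote (TB S # \<Gamma>) (liftT (Suc 0) 0 A) = liftT (Suc 0) 0 (promote \<Gamma> A)"
  by (cases A) auto

lemma promote_TVar_bound: "tvbound \<Gamma> i = Some B \<Longrightarrow> promote \<Gamma> (TVar i) = promote \<Gamma> B"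
proof (induct \<Gamma> arbitrary: i B)
  case (Cons b \<Gamma>)
  then show ?case
    by (cases b; cases i) (auto simp: promote_liftT)
qed simp

lemma sub_promote: "sub \<Gamma> T (promote \<Gamma> T)"
proof (induct \<Gamma> arbitrary: T)
  case Nil
  then show ?case by (simp add: sub.SRefl)
next
  case (Cons b \<Gamma>)
  show ?case
  proof (cases b)
    case (VB U)
    then show ?thesis using Cons sub_add_VB by simp
  next
    case (TB S)
    show ?thesis
    proof (cases T)
      case (TVar i)
      show ?thesis
      proof (cases i)
        case 0
        have "sub (TB S # \<Gamma>) (TVar 0) (liftT 1 0 S)" by (rule sub.SVar) simp
        moreover have "sub (TB S # \<Gamma>) (liftT 1 0 S) (liftT 1 0 (promote \<Gamma> S))"
          using Cons sub_weaken_TB by blast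
        ultimately show ?thesis using TB TVar 0 by (auto intro: sub.STrans)
      next
        case (Suc j)
        have "sub (TB S # \<Gamma>) (liftT 1 0 (TVar j)) (liftT 1 0 (promote \<Gamma> (TVar j)))"
          using Cons sub_weaken_TB by blast
        then show ?thesis using TB TVar Suc by simp
      qed
    qed (auto intro: sub.SRefl)
  qed
qed

lemma sub_Arr_inversion:
  "sub \<Gamma> A B \<Longrightarrow> promote \<Gamma> B = Arr B1 B2 \<Longrightarrow>
   \<exists>A1 A2. promote \<Gamma> A = Arr A1 A2 \<and> sub \<Gamma> B1 A1 \<and> sub \<Gamma> A2 B2"
proof (induction arbitrary: B1 B2 rule: sub.induct)
  case (STrans \<Gamma> S U T)
  then obtain U1 U2 where U: "promote \<Gamma> U = Arr U1 U2" "sub \<Gamma> B1 U1" "sub \<Gamma> U2 B2"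
    by blast
  with STrans.IH(1) show ?case by (blast intro: sub.STrans)
qed (auto intro: sub.SRefl simp: promote_TVar_bound)

lemma sub_AllK_inversion:
  "sub \<Gamma> A B \<Longrightarrow> promote \<Gamma> B = AllK B1 B2 \<Longrightarrow>
   \<exists>A2. promote \<Gamma> A = AllK B1 A2 \<and> sub (TB B1 # \<Gamma>) A2 B2"
proof (induction arbitrary: B1 B2 rule: sub.induct)
  case (STrans \<Gamma> S U T)
  then obtain U2 where U: "promote \<Gamma> U = AllK B1 U2" "sub (TB B1 # \<Gamma>) U2 B2"
    by blast
  with STrans.IH(1) show ?case by (blast intro: sub.STrans)
qed (auto intro: sub.SRefl simp: promote_TVar_bound)

lemma sub_AllT_inversion:
  "sub \<Gamma> A B \<Longrightarrow> promote \<Gamma> B = AllT B1 B2 \<Longrightarrow>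
   (\<exists>A1 A2. promote \<Gamma> A = AllK A1 A2 \<and> sub \<Gamma> B1 A1 \<and> sub (TB A1 # \<Gamma>) A2 B2) \<or>
   (\<exists>A1 A2. promote \<Gamma> A = AllT A1 A2 \<and> sub \<Gamma> B1 A1 \<and> sub (TB Top # \<Gamma>) A2 B2)"
proof (induction arbitrary: B1 B2 rule: sub.induct)
  case (STrans \<Gamma> S U T)
  from STrans.IH(2)[OF STrans.prems] show ?case
  proof (elim disjE exE conjE)
    fix U1 U2
    assume U: "promote \<Gamma> U = AllK U1 U2" "sub \<Gamma> B1 U1" "sub (TB U1 # \<Gamma>) U2 B2"
    with sub_AllK_inversion[OF STrans.hyps(1)] show ?case by (blast intro: sub.STrans)
  next
    fix U1 U2
    assume U: "promote \<Gamma> U = AllT U1 U2" "sub \<Gamma> B1 U1" "sub (TB Top # \<Gamma>) U2 B2"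
    from STrans.IH(1)[OF U(1)] show ?case
    proof (elim disjE exE conjE)
      fix A1 A2
      assume A: "promote \<Gamma> S = AllK A1 A2" "sub \<Gamma> U1 A1" "sub (TB A1 # \<Gamma>) A2 U2"
      have "sub (TB A1 # \<Gamma>) U2 B2" using U(3) by (rule sub_narrow_Top)
      with A U show ?case by (blast intro: sub.STrans)
    next
      fix A1 A2
      assume "promote \<Gamma> S = AllT A1 A2" "sub \<Gamma> U1 A1" "sub (TB Top # \<Gamma>) A2 U2"
      with U show ?case by (blast intro: sub.STrans)
    qed
  qed
qed (auto intro: sub.SRefl simp: promote_TVar_bound)

lemma mtyp_sound: "mtyp \<Gamma> t S \<Longrightarrow> typing \<Gamma> t S"
proof (induction rule: mtyp.induct)
  case (MApp \<Gamma> r R s S S' T)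
  have "typing \<Gamma> r (Arr S' T)" using MApp TySub sub_promote by metis
  moreover have "typing \<Gamma> s S'" using MApp TySub by metis
  ultimately show ?case by (rule TyApp)
next
  case (MTApp \<Gamma> r R S S' T)
  have "sub \<Gamma> (promote \<Gamma> R) (AllT S' T)"
    using MTApp.hyps(3) SAllLoc[OF SRefl SRefl] SRefl by auto
  then have "typing \<Gamma> r (AllT S' T)" using MTApp.IH sub_promote TySub STrans by metis
  then show ?case using MTApp.hyps(2) by (rule TyTApp)
qed (auto intro: typing.intros)

lemma mtyp_complete: "typing \<Gamma> t T \<Longrightarrow> \<exists>S. mtyp \<Gamma> t S \<and> sub \<Gamma> S T"
proof (induction rule: typing.induct)
  case (TySub \<Gamma> t T T')
  then show ?case by (auto intro: sub.STrans)
next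
  case (TyAbs S \<Gamma> t T)
  then obtain S0 where "mtyp (VB S # \<Gamma>) t S0" "sub (VB S # \<Gamma>) S0 T" by blast
  then show ?case by (blast intro: MAbs SArr SRefl sub_drop_VB)
next
  case (TyApp \<Gamma> t S T s)
  then obtain R Q where "mtyp \<Gamma> t R" "sub \<Gamma> R (Arr S T)" "mtyp \<Gamma> s Q" "sub \<Gamma> Q S" by blast
  moreover from sub_Arr_inversion[OF \<open>sub \<Gamma> R (Arr S T)\<close>]
  obtain A1 A2 where "promote \<Gamma> R = Arr A1 A2" "sub \<Gamma> S A1" "sub \<Gamma> A2 T" by auto
  ultimately show ?case by (blast intro: MApp sub.STrans)
next
  case (TyTAbs S \<Gamma> t T)
  then show ?case by (blast intro: MTAbs SAllFun)
next
  case (TyTApp \<Gamma> t S T S')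
  then obtain R where R: "mtyp \<Gamma> t R" "sub \<Gamma> R (AllT S T)" by blast
  have "promote \<Gamma> (AllT S T) = AllT S T" by simp
  from sub_AllT_inversion[OF R(2) this] show ?case
  proof (elim disjE exE conjE)
    fix A1 A2
    assume A: "promote \<Gamma> R = AllK A1 A2" "sub \<Gamma> S A1" "sub (TB A1 # \<Gamma>) A2 T"
    have "sub \<Gamma> S' A1" using TyTApp.hyps(2) A(2) by (rule sub.STrans)
    then have "mtyp \<Gamma> (TApp t S') (substT A2 0 S')" using R(1) A(1) by (blast intro: MTApp)
    moreover have "sub \<Gamma> (substT A2 0 S') (substT T 0 S')"
      using A(3) \<open>sub \<Gamma> S' A1\<close> by (rule sub_substT0)
    ultimately show ?case by blast
  next
    fix A1 A2
    assume A: "promote \<Gamma> R = AllT A1 A2" "sub \<Gamma> S A1" "sub (TB Top # \<Gamma>) A2 T"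
    have "sub \<Gamma> S' A1" using TyTApp.hyps(2) A(2) by (rule sub.STrans)
    then have "mtyp \<Gamma> (TApp t S') (substT A2 0 S')" using R(1) A(1) by (blast intro: MTApp)
    moreover have "sub \<Gamma> (substT A2 0 S') (substT T 0 S')"
      using A(3) STop by (rule sub_substT0)
    ultimately show ?case by blast
  qed
qed (auto intro: mtyp.intros sub.intros)

theorem proposition6p4:
  assumes "wf_ctx \<Gamma>" and "wf_tm \<Gamma> t" and "wfT (ntv \<Gamma>) T"
  shows "typing \<Gamma> t T \<longleftrightarrow> (\<exists>S. mtyp \<Gamma> t S \<and> sub \<Gamma> S T)"
  using mtyp_complete mtyp_sound TySub by blast

end
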